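(* Let $N\ge 1$, $m\ge 2$, and consider $N$ agents with states $x_i(t)\in\mathbb{R}^m$ obeying $\dot x_i(t)=Ax_i(t)+Bu_i(t)$, $i=1,\dots,N$, where $A$ and $B$ are the $m$-th order integrator matrices (see context). Let $\mathcal{G}_{\sigma(t)}$ be a switching family of weighted digraphs on $N$ nodes satisfying the dwell-time assumption, and apply the protocol $$u_i(t)=K_1x_i(t)-\sum_{j\in\mathcal{N}_i(\sigma(t))}\alpha^{ij}_{\sigma(t)}K_2\big(x_i(t)-x_j(t)\big),$$ with $K_1=(0,-a_1,-a_2,\dots,-a_{m-1})\in\mathbb{R}^{1\times m}$ and $K_2=(a_1,a_2,\dots,a_{m-1},1)\in\mathbb{R}^{1\times m}$, where $a_1,\dots,a_{m-1}\in\mathbb{R}$. Suppose all roots of $s^{m-1}+a_{m-1}s^{m-2}+\cdots+a_2s+a_1=0$ have strictly negative real part and $\mathcal{G}_{\sigma(t)}$ is uniformly jointly quasi-strongly connected. Then for every initial condition $x_1(0),\dots,x_N(0)$ there exists $\bar{x}^*\in\mathbb{R}$ such that $\lim_{t\to\infty}x_i(t)=(\bar x^*/a_1,0,\dots,0)^T$ for all $i=1,\dots,N$; in particular the multi-agent system reaches consensus.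
   Context: $A=\begin{pmatrix}0_{m-1}& I_{m-1}\\ 0 & 0_{m-1}^T\end{pmatrix}\in\mathbb{R}^{m\times m}$ (ones on the superdiagonal, zeros elsewhere) and $B=(0,\dots,0,1)^T\in\mathbb{R}^m$, so that $\dot x_{i,1}=x_{i,2},\dots,\dot x_{i,m-1}=x_{i,m},\dot x_{i,m}=u_i$. Graphs: nodes $v_1,\dots,v_N$ (node $v_i$ is agent $i$); an edge $e_{ij}$ from $v_j$ to $v_i$ means agent $i$ receives information from agent $j$; no self-edges. $\mathcal{S}$ is a finite index set of such digraphs; each graph $\mathcal{G}_k$, $k\in\mathcal{S}$, carries fixed weights $\alpha^{ij}_k>0$ for each edge $e_{ij}$ of $\mathcal{G}_k$ (and $\alpha^{ij}_k=0$ if $e_{ij}$ is not an edge). $\mathcal{N}_i(k)=\{j: e_{ij}\in\mathcal{G}_k\}$. $\sigma:[0,\infty)\to\mathcal{S}$ is piecewise constant; dwell-time assumption: the switching instants $t_0<t_1<\cdots$ satisfy $t_{i+1}-t_i\ge\tau_D$ for a constant $\tau_D>0$. A directed path is a sequence of distinct nodes $v_{i_1},\dots,v_{i_p}$ with $e_{i_{s+1}i_s}$ an edge for each $s$. A digraph is quasi-strongly connected if it has a node (root) from which there is a directed path to every other node. The union graph over $[t_1,t_2)$ has node set $\{v_1,\dots,v_N\}$ and edge set $\bigcup_{t\in[t_1,t_2)}\mathcal{E}(\mathcal{G}_{\sigma(t)})$. $\mathcal{G}_{\sigma(t)}$ is uniformly jointly quasi-strongly connected if there is $T>0$ such that the union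 graph over $[t,t+T)$ is quasi-strongly connected for every $t\ge 0$. The system reaches consensus if there exists $x^*\in\mathbb{R}^m$ with $\lim_{t\to\infty}x_i(t)=x^*$ for all $i$. *)

theory Defs
  imports "HOL-Analysis.Analysis"
begin

text \<open>Conventions: agents are indexed 0..N-1, state components 0..m-1
(component c corresponds to x_{i,c+1} of the paper). Switching graphs are
given by weights w k i j (weight alpha^{ij}_k of edge from v_j to v_i in G_k;
zero iff no edge).\<close>

definition intA :: "nat \<Rightarrow> nat \<Rightarrow> nat \<Rightarrow> real" where
  "intA m c d = (if d = c + 1 \<and> d < m then 1 else 0)"

definition intB :: "nat \<Rightarrow> nat \<Rightarrow> real" where
  "intB m c = (if c = m - 1 then 1 else 0)"

definition gainK1 :: "(nat \<Rightarrow> real) \<Rightarrow> nat \<Rightarrow> real" where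
  "gainK1 a c = (if c = 0 then 0 else - a c)"

definition gainK2 :: "(nat \<Rightarrow> real) \<Rightarrow> nat \<Rightarrow> nat \<Rightarrow> real" where
  "gainK2 a m c = (if c = m - 1 then 1 else a (c + 1))"

definition neighbors :: "nat \<Rightarrow> ('s \<Rightarrow> nat \<Rightarrow> nat \<Rightarrow> real) \<Rightarrow> 's \<Rightarrow> nat \<Rightarrow> nat set" where
  "neighbors N w k i = {j. j < N \<and> w k i j > 0}"

definition protocol ::
  "nat \<Rightarrow> nat \<Rightarrow> (nat \<Rightarrow> real) \<Rightarrow> ('s \<Rightarrow> nat \<Rightarrow> nat \<Rightarrow> real) \<Rightarrow> (real \<Rightarrow> 's)
   \<Rightarrow> (nat \<Rightarrow> real \<Rightarrow> nat \<Rightarrow> real) \<Rightarrow> nat \<Rightarrow> real \<Rightarrow> real" where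
  "protocol N m a w \<sigma> x i t =
     (\<Sum>c<m. gainK1 a c * x i t c)
     - (\<Sum>j\<in>neighbors N w (\<sigma> t) i. w (\<sigma> t) i j * (\<Sum>c<m. gainK2 a m c * (x i t c - x j t c)))"

text \<open>Edge relation (pairs (j,i): edge from v_j to v_i) of the union graph over [t1,t2).\<close>
definition union_edges ::
  "nat \<Rightarrow> ('s \<Rightarrow> nat \<Rightarrow> nat \<Rightarrow> real) \<Rightarrow> (real \<Rightarrow> 's) \<Rightarrow> real \<Rightarrow> real \<Rightarrow> (nat \<times> nat) set" where
  "union_edges N w \<sigma> t1 t2 =
     {(j, i). j < N \<and> i < N \<and> (\<exists>t\<in>{t1..<t2}. w (\<sigma> t) i j > 0)}"

definition quasi_strongly_connected :: "nat \<Rightarrow> (nat \<times> nat) set \<Rightarrow> bool" where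
  "quasi_strongly_connected N E \<longleftrightarrow> (\<exists>r<N. \<forall>i<N. (r, i) \<in> E\<^sup>*)"

definition ujqsc :: "nat \<Rightarrow> ('s \<Rightarrow> nat \<Rightarrow> nat \<Rightarrow> real) \<Rightarrow> (real \<Rightarrow> 's) \<Rightarrow> bool" where
  "ujqsc N w \<sigma> \<longleftrightarrow> (\<exists>T>0. \<forall>t\<ge>0. quasi_strongly_connected N (union_edges N w \<sigma> t (t + T)))"

definition dwell_time_switching ::
  "'s set \<Rightarrow> (real \<Rightarrow> 's) \<Rightarrow> (nat \<Rightarrow> real) \<Rightarrow> real \<Rightarrow> bool" where
  "dwell_time_switching S \<sigma> ts tauD \<longleftrightarrow>
     tauD > 0 \<and> ts 0 = 0 \<and> (\<forall>n. ts (Suc n) - ts n \<ge> tauD) \<and>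
     (\<forall>n t. ts n \<le> t \<and> t < ts (Suc n) \<longrightarrow> \<sigma> t = \<sigma> (ts n)) \<and>
     (\<forall>t\<ge>0. \<sigma> t \<in> S)"

definition closed_loop_solution ::
  "nat \<Rightarrow> nat \<Rightarrow> (nat \<Rightarrow> real) \<Rightarrow> ('s \<Rightarrow> nat \<Rightarrow> nat \<Rightarrow> real) \<Rightarrow> (real \<Rightarrow> 's)
   \<Rightarrow> (nat \<Rightarrow> real) \<Rightarrow> (nat \<Rightarrow> real \<Rightarrow> nat \<Rightarrow> real) \<Rightarrow> bool" where
  "closed_loop_solution N m a w \<sigma> ts x \<longleftrightarrow>
     (\<forall>i<N. \<forall>c<m. continuous_on {0..} (\<lambda>t. x i t c)) \<and>
     (\<forall>i<N. \<forall>c<m. \<forall>t\<ge>0. t \<notin> range ts \<longrightarrow>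
        ((\<lambda>s. x i s c) has_real_derivative
           ((\<Sum>d<m. intA m c d * x i t d) + intB m c * protocol N m a w \<sigma> x i t))
        (at t within {0..}))"

end

theory Submission
  imports Defs "HOL-Real_Asymp.Real_Asymp" "HOL-Computational_Algebra.Fundamental_Theorem_Algebra"
begin

text \<open>The output \<open>y_i = K2 x_i\<close> of every agent obeys the first-order consensus dynamics
  \<open>y_i' = \<Sum>_j \<alpha>^{ij}_\<sigma> (y_j - y_i)\<close>, because the term \<open>K1 x_i\<close> of the protocol cancels the
  internal drift. For these dynamics the maximum over the agents never increases and the
  minimum never decreases. An excess over the minimum decays at most exponentially and is
  passed on along every edge, which by the dwell time stays active on a whole interval;
  following the rooted union graphs, after \<open>N\<close> periods either all agents are bounded away
  from the old minimum or all from the old maximum. So the spread contracts geometrically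
  and all \<open>y_i\<close> converge to a common \<open>y*\<close>.

  The deviations \<open>x_{i,1} - y*/a_1, x_{i,2}, \<dots>, x_{i,m-1}\<close> then form a chain of integrators
  closed by the stable polynomial \<open>s^{m-1} + a_{m-1} s^{m-2} + \<dots> + a_1\<close> and forced by
  \<open>y_i - y* \<rightarrow> 0\<close>; splitting off one stable root at a time reduces this to scalar equations
  \<open>e' = \<lambda> e + g\<close> with \<open>Re \<lambda> < 0\<close> and \<open>g \<rightarrow> 0\<close>, whose solutions tend to 0.\<close>

section \<open>Differential inequalities off a locally finite set\<close>

lemma le_if_derivative_nonneg_except_finite:
  fixes f f' :: "real \<Rightarrow> real"
  assumes fin: "finite (C \<inter> {a..b})" and ab: "a \<le> b"
    and der: "\<And>x. x \<in> {a<..<b} \<Longrightarrow> x \<notin> C \<Longrightarrow> (f has_real_derivative f' x) (at x) \<and> f' x \<ge> 0"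
    and cont: "continuous_on {a..b} f"
  shows "f a \<le> f b"
proof -
  have "((\<lambda>x. max 0 (f' x)) has_integral (f b - f a)) {a..b}"
  proof (rule fundamental_theorem_of_calculus_interior_strong[OF fin ab _ cont])
    fix x assume "x \<in> {a<..<b} - C \<inter> {a..b}"
    with der[of x] show "(f has_vector_derivative max 0 (f' x)) (at x)"
      by (auto simp: has_real_derivative_iff_has_vector_derivative[symmetric] max_def)
  qed
  then have "0 \<le> f b - f a" by (rule has_integral_nonneg) auto
  then show ?thesis by simp
qed

lemma norm_diff_le_if_derivative_bound_except_finite:
  fixes q q' :: "real \<Rightarrow> 'a::banach" and G g :: "real \<Rightarrow> real"
  assumes fin: "finite (C \<inter> {a..b})" and ab: "a \<le> b"
    and der: "\<And>x. x \<in> {a<..<b} \<Longrightarrow> x \<notin> C \<Longrightarrow> (q has_vector_derivative q' x) (at x)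
        \<and> (G has_real_derivative g x) (at x) \<and> norm (q' x) \<le> g x"
    and cont: "continuous_on {a..b} q" "continuous_on {a..b} G"
  shows "norm (q b - q a) \<le> G b - G a"
proof -
  define P where "P = {a<..<b} - C"
  define q'' where "q'' x = (if x \<in> P then q' x else 0)" for x
  define g'' where "g'' x = (if x \<in> P then g x else 0)" for x
  have q: "(q'' has_integral (q b - q a)) {a..b}"
  proof (rule fundamental_theorem_of_calculus_interior_strong[OF fin ab _ cont(1)])
    fix x assume "x \<in> {a<..<b} - C \<inter> {a..b}"
    with der[of x] show "(q has_vector_derivative q'' x) (at x)"
      by (auto simp: q''_def P_def)
  qed
  have G: "(g'' has_integral (G b - G a)) {a..b}"
  proof (rule fundamental_theorem_of_calculus_interior_strong[OF fin ab _ cont(2)])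
    fix x assume "x \<in> {a<..<b} - C \<inter> {a..b}"
    with der[of x] show "(G has_vector_derivative g'' x) (at x)"
      by (auto simp: g''_def P_def has_real_derivative_iff_has_vector_derivative[symmetric])
  qed
  have "norm (integral {a..b} q'') \<le> integral {a..b} g''"
    by (rule integral_norm_bound_integral) (use q G der in \<open>auto simp: q''_def g''_def P_def\<close>)
  then show ?thesis using q G by (simp add: integral_unique)
qed

lemma gronwall_lower_bound_except_finite:
  fixes f f' :: "real \<Rightarrow> real"
  assumes fin: "finite (E \<inter> {a..b})" and ab: "a \<le> b"
    and der: "\<And>s. s \<in> {a<..<b} \<Longrightarrow> s \<notin> E \<Longrightarrow> (f has_real_derivative f' s) (at s) \<and> f' s \<ge> - K * f s"
    and cont: "continuous_on {a..b} f"
  shows "f b \<ge> exp (- K * (b - a)) * f a"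
proof -
  define h where "h s = exp (K * s) * f s" for s
  have "h a \<le> h b"
  proof (rule le_if_derivative_nonneg_except_finite[OF fin ab, of h "\<lambda>s. exp (K * s) * (f' s + K * f s)"])
    fix s assume s: "s \<in> {a<..<b}" "s \<notin> E"
    from der[OF s] have d: "(f has_real_derivative f' s) (at s)" and g: "f' s \<ge> - K * f s" by auto
    have "(h has_real_derivative exp (K * s) * (f' s + K * f s)) (at s)"
      unfolding h_def using d by (auto intro!: derivative_eq_intros simp: algebra_simps)
    moreover have "exp (K * s) * (f' s + K * f s) \<ge> 0" using g by simp
    ultimately show "(h has_real_derivative exp (K * s) * (f' s + K * f s)) (at s) \<and> 0 \<le> exp (K * s) * (f' s + K * f s)"
      by blast
  qed (unfold h_def, intro continuous_intros cont)
  have "exp (- K * (b - a)) * f a = exp (- K * b) * (exp (K * a) * f a)"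
    by (simp add: mult.assoc[symmetric] mult_exp_exp right_diff_distrib)
  also have "\<dots> \<le> exp (- K * b) * (exp (K * b) * f b)"
    using \<open>h a \<le> h b\<close> unfolding h_def by (intro mult_left_mono) auto
  also have "\<dots> = f b"
    by (simp add: mult.assoc[symmetric] mult_exp_exp)
  finally show ?thesis .
qed

lemma gronwall_lower_bound_affine_except_finite:
  fixes f f' :: "real \<Rightarrow> real"
  assumes fin: "finite (E \<inter> {a..b})" and ab: "a \<le> b" and K: "K > 0"
    and der: "\<And>s. s \<in> {a<..<b} \<Longrightarrow> s \<notin> E \<Longrightarrow> (f has_real_derivative f' s) (at s) \<and> f' s \<ge> L - K * f s"
    and cont: "continuous_on {a..b} f"
  shows "f b - L / K \<ge> exp (- K * (b - a)) * (f a - L / K)"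
proof (rule gronwall_lower_bound_except_finite[OF fin ab, of "\<lambda>s. f s - L / K" f'])
  fix s assume s: "s \<in> {a<..<b}" "s \<notin> E"
  from der[OF s] K show "((\<lambda>s. f s - L / K) has_real_derivative f' s) (at s) \<and> - K * (f s - L / K) \<le> f' s"
    by (auto intro!: derivative_eq_intros simp: algebra_simps)
qed (intro continuous_intros cont)

lemma has_real_derivative_square_pos_part:
  "((\<lambda>x::real. (max 0 x)\<^sup>2) has_real_derivative (2 * max 0 x)) (at x)"
proof -
  consider "x > 0" | "x < 0" | "x = 0" by linarith
  then show ?thesis
  proof cases
    case 1
    have "((\<lambda>x::real. x\<^sup>2) has_real_derivative (2 * x)) (at x)"
      by (auto intro!: derivative_eq_intros)
    then have "((\<lambda>x::real. x\<^sup>2) has_real_derivative (2 * max 0 x)) (at x)"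
      using 1 by simp
    then show ?thesis
      by (rule has_field_derivative_transform_within_open[of _ _ _ "{0<..}"]) (use 1 in auto)
  next
    case 2
    have "((\<lambda>x::real. 0) has_real_derivative (2 * max 0 x)) (at x)"
      using 2 by simp
    then show ?thesis
      by (rule has_field_derivative_transform_within_open[of _ _ _ "{..<0}"]) (use 2 in auto)
  next
    case 3
    have "((\<lambda>y::real. max 0 y) \<longlongrightarrow> 0) (at 0)"
      using tendsto_max[OF tendsto_const tendsto_ident_at, of 0 0 UNIV] by simp
    moreover have "\<forall>\<^sub>F y::real in at 0. max 0 y = ((max 0 y)\<^sup>2 - (max 0 0)\<^sup>2) / (y - 0)"
      unfolding eventually_at_filter
      by (rule always_eventually) (auto simp: power2_eq_square max_def)
    ultimately have "((\<lambda>y::real. ((max 0 y)\<^sup>2 - (max 0 0)\<^sup>2) / (y - 0)) \<longlongrightarrow> 0) (at 0)"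
      by (rule Lim_transform_eventually)
    then show ?thesis using 3 by (simp add: has_field_derivative_iff)
  qed
qed

section \<open>Stable linear chains with vanishing forcing\<close>

lemma first_order_stable_bound:
  fixes f g :: "real \<Rightarrow> complex" and l :: complex
  assumes neg: "Re l < 0" and Tt: "T \<le> t" and fin: "finite (C \<inter> {T..t})"
    and cont: "continuous_on {T..t} f"
    and der: "\<And>s. s \<in> {T<..<t} \<Longrightarrow> s \<notin> C \<Longrightarrow> (f has_vector_derivative (l * f s + g s)) (at s)"
    and small: "\<And>s. s \<in> {T<..<t} \<Longrightarrow> norm (g s) \<le> e" and e: "e \<ge> 0"
  shows "norm (f t) \<le> exp (Re l * (t - T)) * norm (f T) + e / - Re l"
proof -
  define mu where "mu = - Re l"
  have mu: "mu > 0" using neg by (simp add: mu_def)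
  define q where "q s = exp (- l * (of_real s - of_real T)) * f s" for s
  define G where "G s = e * exp (mu * (s - T)) / mu" for s
  have "norm (q t - q T) \<le> G t - G T"
  proof (rule norm_diff_le_if_derivative_bound_except_finite[OF fin Tt])
    fix s assume s: "s \<in> {T<..<t}" "s \<notin> C"
    have "((\<lambda>s. exp (- l * (of_real s - of_real T))) has_vector_derivative
             (- l * exp (- l * (of_real s - of_real T)))) (at s)"
      by (rule has_vector_derivative_real_field) (auto intro!: derivative_eq_intros)
    from has_vector_derivative_mult[OF this der[OF s]]
    have "(q has_vector_derivative (exp (- l * (of_real s - of_real T)) * g s)) (at s)"
      unfolding q_def by (simp add: algebra_simps)
    moreover have "(G has_real_derivative (e * exp (mu * (s - T)))) (at s)"
      unfolding G_def using mu by (auto intro!: derivative_eq_intros)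
    moreover have "norm (exp (- l * (of_real s - of_real T)) * g s) \<le> e * exp (mu * (s - T))"
      using small[OF s(1)] by (simp add: norm_mult mu_def mult.commute mult_left_mono)
    ultimately show "(q has_vector_derivative (exp (- l * (of_real s - of_real T)) * g s)) (at s) \<and>
        (G has_real_derivative (e * exp (mu * (s - T)))) (at s) \<and>
        norm (exp (- l * (of_real s - of_real T)) * g s) \<le> e * exp (mu * (s - T))" by blast
  next
    show "continuous_on {T..t} q" unfolding q_def by (intro continuous_intros cont)
    show "continuous_on {T..t} G" unfolding G_def using mu by (intro continuous_intros) auto
  qed
  moreover have "norm (q t) = exp (mu * (t - T)) * norm (f t)" "norm (q T) = norm (f T)"
    by (simp_all add: q_def norm_mult mu_def)
  moreover have "G T \<ge> 0" using e mu by (simp add: G_def)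
  ultimately have "exp (mu * (t - T)) * norm (f t) \<le> norm (f T) + G t"
    using norm_triangle_ineq2[of "q t" "q T"] by linarith
  then have "exp (mu * (t - T)) * norm (f t) \<le> norm (f T) + exp (mu * (t - T)) * (e / mu)"
    by (simp add: G_def mult.commute)
  then have "norm (f t) \<le> (norm (f T) + exp (mu * (t - T)) * (e / mu)) / exp (mu * (t - T))"
    by (simp add: pos_le_divide_eq mult.commute)
  also have "\<dots> = norm (f T) / exp (mu * (t - T)) + e / mu"
    by (simp add: add_divide_distrib)
  also have "exp (mu * (t - T)) = inverse (exp (Re l * (t - T)))"
    by (simp add: mu_def exp_minus[symmetric])
  finally show ?thesis by (simp add: mu_def divide_inverse mult.commute)
qed

lemma first_order_stable_tendsto_zero:
  fixes f g :: "real \<Rightarrow> complex" and l :: complex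
  assumes neg: "Re l < 0" and cont: "continuous_on {t0..} f"
    and fin: "\<And>a b. finite (C \<inter> {a..b})"
    and der: "\<And>t. t > t0 \<Longrightarrow> t \<notin> C \<Longrightarrow> (f has_vector_derivative (l * f t + g t)) (at t)"
    and lim: "(g \<longlongrightarrow> 0) at_top"
  shows "(f \<longlongrightarrow> 0) at_top"
proof (rule tendstoI)
  fix e :: real assume e: "e > 0"
  define e' where "e' = e * - Re l / 2"
  have e': "e' > 0" using e neg by (simp add: e'_def mult_pos_neg)
  from tendstoD[OF lim e'] obtain T0 where T0: "\<And>t. t \<ge> T0 \<Longrightarrow> norm (g t) < e'"
    by (auto simp: eventually_at_top_linorder)
  define T where "T = max T0 (t0 + 1)"
  have bound: "norm (f t) \<le> exp (Re l * (t - T)) * norm (f T) + e / 2" if t: "t \<ge> T" for t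
  proof -
    have "norm (f t) \<le> exp (Re l * (t - T)) * norm (f T) + e' / - Re l"
    proof (rule first_order_stable_bound[OF neg t fin])
      show "continuous_on {T..t} f" by (rule continuous_on_subset[OF cont]) (auto simp: T_def)
      show "\<And>s. s \<in> {T<..<t} \<Longrightarrow> s \<notin> C \<Longrightarrow> (f has_vector_derivative l * f s + g s) (at s)"
        by (rule der) (auto simp: T_def)
      show "norm (g s) \<le> e'" if "s \<in> {T<..<t}" for s
        using T0[of s] that by (simp add: T_def)
    qed (use e' in simp)
    then show ?thesis using neg by (simp add: e'_def)
  qed
  have "((\<lambda>t. exp (Re l * (t - T)) * norm (f T)) \<longlongrightarrow> 0) at_top"
    using neg by real_asymp
  then have "\<forall>\<^sub>F t in at_top. exp (Re l * (t - T)) * norm (f T) < e / 2"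
    using e by (auto dest!: order_tendstoD(2)[where a = "e/2"])
  with eventually_ge_at_top[of T] show "\<forall>\<^sub>F t in at_top. dist (f t) 0 < e"
    by eventually_elim (use bound in force)
qed

lemma sum_coeff_mult_linear_factor:
  fixes q :: "'a::comm_ring_1 poly"
  assumes "degree q = n" "lead_coeff q = 1"
  shows "(\<Sum>k<Suc n. coeff ([:-l, 1:] * q) k * y k) + l * y n
       = (\<Sum>k<n. coeff q k * (y (k + 1) - l * y k))"
proof -
  have "coeff ([:-l, 1:] * q) k = (if k = 0 then 0 else coeff q (k - 1)) - l * coeff q k" for k
    by (cases k) auto
  then have "(\<Sum>k<Suc n. coeff ([:-l, 1:] * q) k * y k)
      = (\<Sum>k<Suc n. (if k = 0 then 0 else coeff q (k - 1)) * y k) - l * (\<Sum>k<Suc n. coeff q k * y k)"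
    by (simp only: left_diff_distrib sum_subtractf mult.assoc sum_distrib_left)
  also have "(\<Sum>k<Suc n. (if k = 0 then 0 else coeff q (k - 1)) * y k) = (\<Sum>k<n. coeff q k * y (k + 1))"
    by (subst sum.lessThan_Suc_shift) simp
  also have "(\<Sum>k<Suc n. coeff q k * y k) = (\<Sum>k<n. coeff q k * y k) + y n"
    using assms by simp
  finally show ?thesis
    by (simp add: algebra_simps sum_subtractf sum_distrib_left)
qed

lemma has_vector_derivative_linear_factor_difference:
  fixes q :: "complex poly"
  assumes degq: "degree q = n" and lcq: "lead_coeff q = 1" and n: "n \<noteq> 0"
    and dy: "(y (n - 1) has_vector_derivative y n t) (at t)"
    and dyn: "(y n has_vector_derivative r - (\<Sum>k<Suc n. coeff ([:-l, 1:] * q) k * y k t)) (at t)"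
  shows "((\<lambda>t. y n t - l * y (n - 1) t) has_vector_derivative
           r - (\<Sum>k<n. coeff q k * (y (k + 1) t - l * y k t))) (at t)"
proof -
  have "((\<lambda>t. y n t - l * y (n - 1) t) has_vector_derivative
         r - ((\<Sum>k<Suc n. coeff ([:-l, 1:] * q) k * y k t) + l * y n t)) (at t)"
    using dy dyn by (auto intro!: derivative_eq_intros simp: algebra_simps)
  then show ?thesis
    unfolding sum_coeff_mult_linear_factor[OF degq lcq, of l "\<lambda>k. y k t"] .
qed

lemma tendsto_zero_from_differences:
  fixes y :: "nat \<Rightarrow> 'b \<Rightarrow> 'a::real_normed_field"
  assumes "(y 0 \<longlongrightarrow> 0) F" and "\<And>k. k < n \<Longrightarrow> ((\<lambda>t. y (k + 1) t - l * y k t) \<longlongrightarrow> 0) F"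
    and "k \<le> n"
  shows "(y k \<longlongrightarrow> 0) F"
  using assms(3)
proof (induction k)
  case 0
  show ?case by (rule assms(1))
next
  case (Suc k)
  have "((\<lambda>t. (y (k + 1) t - l * y k t) + l * y k t) \<longlongrightarrow> 0 + l * 0) F"
    using Suc assms(2) by (intro tendsto_intros) auto
  then show ?case by simp
qed

lemma higher_order_stable_tendsto_zero:
  fixes p :: "complex poly" and y :: "nat \<Rightarrow> real \<Rightarrow> complex" and r :: "real \<Rightarrow> complex"
  assumes "degree p = n" "n \<ge> 1" "lead_coeff p = 1" "\<forall>z. poly p z = 0 \<longrightarrow> Re z < 0"
    and "\<forall>k<n. continuous_on {t0..} (y k)"
    and "\<And>a b. finite (C \<inter> {a..b})"
    and "\<forall>t>t0. t \<notin> C \<longrightarrow> (\<forall>k. k + 1 < n \<longrightarrow> (y k has_vector_derivative y (k + 1) t) (at t))"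
    and "\<forall>t>t0. t \<notin> C \<longrightarrow> (y (n - 1) has_vector_derivative (r t - (\<Sum>k<n. coeff p k * y k t))) (at t)"
    and "(r \<longlongrightarrow> 0) at_top"
  shows "\<forall>k<n. (y k \<longlongrightarrow> 0) at_top"
  using assms
proof (induction n arbitrary: p y r)
  case 0
  then show ?case by simp
next
  case (Suc n)
  note fin = Suc.prems(6)
  obtain l where l: "poly p l = 0"
    using fundamental_theorem_of_algebra_alt[of p] Suc.prems(1) by fastforce
  have lneg: "Re l < 0" using l Suc.prems(4) by blast
  obtain q where pq: "p = [:-l, 1:] * q" using l poly_eq_0_iff_dvd by (metis dvdE)
  have "q \<noteq> 0" using pq Suc.prems(3) by auto
  then have degq: "degree q = n"
    using Suc.prems(1) degree_mult_eq[of "[:-l, 1:]" q] unfolding pq by simp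
  have lcq: "lead_coeff q = 1"
    using Suc.prems(3) lead_coeff_mult[of "[:-l, 1:]" q] unfolding pq by simp
  \<comment> \<open>\<open>w k = y (k+1) - l y k\<close> solves the system of \<open>q = p / (X - l)\<close>; when \<open>q = 1\<close> only the forcing \<open>r\<close> is left\<close>
  define w where "w k t = (if n = 0 then r t else y (k + 1) t - l * y k t)" for k t
  have wlim: "\<forall>k<n. (w k \<longlongrightarrow> 0) at_top" if n0: "n \<noteq> 0"
  proof (rule Suc.IH[of q w r])
    have wk: "w k = (\<lambda>t. y (k + 1) t - l * y k t)" for k
      using n0 by (auto simp: w_def)
    show "\<forall>z. poly q z = 0 \<longrightarrow> Re z < 0" using Suc.prems(4) pq by auto
    show "\<forall>k<n. continuous_on {t0..} (w k)" unfolding wk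
      using Suc.prems(5) by (auto intro!: continuous_intros)
    show "\<forall>t>t0. t \<notin> C \<longrightarrow> (\<forall>k. k + 1 < n \<longrightarrow> (w k has_vector_derivative w (k + 1) t) (at t))"
      using Suc.prems(7) unfolding wk by (auto intro!: derivative_eq_intros)
    show "\<forall>t>t0. t \<notin> C \<longrightarrow> (w (n - 1) has_vector_derivative r t - (\<Sum>k<n. coeff q k * w k t)) (at t)"
    proof (intro allI impI)
      fix t assume t: "t > t0" "t \<notin> C"
      have "(y (n - 1) has_vector_derivative y n t) (at t)"
        using Suc.prems(7) t n0 by (metis Suc_diff_1 Suc_eq_plus1 lessI not_gr_zero)
      from has_vector_derivative_linear_factor_difference[OF degq lcq n0 this] Suc.prems(8) t n0
      show "(w (n - 1) has_vector_derivative r t - (\<Sum>k<n. coeff q k * w k t)) (at t)"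
        unfolding wk pq by simp
    qed
  qed (use degq lcq n0 fin Suc.prems(9) in auto)
  have w0: "(w 0 \<longlongrightarrow> 0) at_top"
  proof (cases "n = 0")
    case True
    then have "w 0 = r" by (auto simp: w_def)
    with Suc.prems(9) show ?thesis by simp
  qed (use wlim in auto)
  have y0: "(y 0 \<longlongrightarrow> 0) at_top"
  proof (rule first_order_stable_tendsto_zero[OF lneg _ fin _ w0])
    show "continuous_on {t0..} (y 0)" using Suc.prems(5) by auto
    fix t assume t: "t > t0" "t \<notin> C"
    show "(y 0 has_vector_derivative l * y 0 t + w 0 t) (at t)"
    proof (cases "n = 0")
      case True
      then show ?thesis using Suc.prems(8) t degq lcq by (simp add: pq w_def algebra_simps)
    next
      case False
      then show ?thesis using Suc.prems(7) t by (simp add: w_def)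
    qed
  qed
  have diffs: "((\<lambda>t. y (k + 1) t - l * y k t) \<longlongrightarrow> 0) at_top" if "k < n" for k
  proof -
    have "w k = (\<lambda>t. y (k + 1) t - l * y k t)" using that by (auto simp: w_def)
    then show ?thesis using wlim that by auto
  qed
  show ?case
    using tendsto_zero_from_differences[where F = at_top, OF y0 diffs] by (simp add: less_Suc_eq_le)
qed

section \<open>Linear consensus with time-varying weights\<close>

lemma pos_part_mult_diff_le:
  fixes x y M :: real
  shows "max 0 (x - M) * (y - x) \<le> ((max 0 (x - M))\<^sup>2 + (max 0 (y - M))\<^sup>2) / 2"
proof -
  have "max 0 (x - M) * (y - x) \<le> max 0 (x - M) * max 0 (y - M)"
    by (cases "x \<le> M") (auto intro!: mult_left_mono)
  also have "\<dots> \<le> ((max 0 (x - M))\<^sup>2 + (max 0 (y - M))\<^sup>2) / 2"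
    using sum_squares_bound[of "max 0 (x - M)" "max 0 (y - M)"] by (simp add: power2_eq_square)
  finally show ?thesis .
qed

locale linear_consensus =
  fixes N :: nat and W :: "real \<Rightarrow> nat \<Rightarrow> nat \<Rightarrow> real" and E :: "real set" and Wmax :: real
  assumes N_pos: "N \<ge> 1" and finite_E: "\<And>a b. finite (E \<inter> {a..b})"
    and W_nonneg: "\<And>t i j. t \<ge> 0 \<Longrightarrow> W t i j \<ge> 0"
    and W_le: "\<And>t i j. t \<ge> 0 \<Longrightarrow> i < N \<Longrightarrow> j < N \<Longrightarrow> W t i j \<le> Wmax"
begin

definition consensus_solution :: "(nat \<Rightarrow> real \<Rightarrow> real) \<Rightarrow> bool" where
  "consensus_solution z \<longleftrightarrow> (\<forall>i<N. continuous_on {0..} (z i)) \<and>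
     (\<forall>i<N. \<forall>t>0. t \<notin> E \<longrightarrow> (z i has_real_derivative (\<Sum>j<N. W t i j * (z j t - z i t))) (at t))"

text \<open>\<open>D\<close> exceeds every row sum of the weights, so it is a uniform decay rate for the
  distance of a state to any lower bound of all states.\<close>
definition D :: real where
  "D = real N * Wmax + 1"

lemma Wmax_nonneg: "Wmax \<ge> 0"
  using W_nonneg[of 0 0 0] W_le[of 0 0 0] N_pos by auto

lemma D_pos: "D > 0"
  using Wmax_nonneg by (simp add: D_def add_nonneg_pos)

lemma N_Wmax_le_D: "real N * Wmax \<le> D"
  by (simp add: D_def)

lemma row_sum_le_D: "t \<ge> 0 \<Longrightarrow> i < N \<Longrightarrow> (\<Sum>j<N. W t i j) \<le> D"
  using sum_bounded_above[of "{..<N}" "W t i" Wmax] W_le N_Wmax_le_D by fastforce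

lemma consensus_solution_uminus:
  assumes "consensus_solution z"
  shows "consensus_solution (\<lambda>i t. - z i t)"
proof -
  have "(\<Sum>j<N. W t i j * (- z j t - - z i t)) = - (\<Sum>j<N. W t i j * (z j t - z i t))" for t i
    by (simp add: sum_negf[symmetric] algebra_simps)
  then show ?thesis
    using assms unfolding consensus_solution_def
    by (auto intro!: continuous_intros derivative_intros)
qed

lemma consensus_solution_continuous_on:
  "consensus_solution z \<Longrightarrow> i < N \<Longrightarrow> 0 \<le> a \<Longrightarrow> continuous_on {a..b} (z i)"
  unfolding consensus_solution_def by (auto intro: continuous_on_subset)

lemma consensus_solution_derivative:
  "consensus_solution z \<Longrightarrow> i < N \<Longrightarrow> t > 0 \<Longrightarrow> t \<notin> E \<Longrightarrow>
    (z i has_real_derivative (\<Sum>j<N. W t i j * (z j t - z i t))) (at t)"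
  unfolding consensus_solution_def by auto

lemma excess_energy_drift_le:
  assumes s: "s \<ge> 0"
  shows "(\<Sum>i<N. max 0 (v i - M) * (\<Sum>j<N. W s i j * (v j - v i)))
       \<le> D * (\<Sum>i<N. (max 0 (v i - M))\<^sup>2)"
proof -
  define p where "p i = max 0 (v i - M)" for i
  define V where "V = (\<Sum>i<N. (p i)\<^sup>2)"
  have "(\<Sum>i<N. p i * (\<Sum>j<N. W s i j * (v j - v i))) = (\<Sum>i<N. \<Sum>j<N. W s i j * (p i * (v j - v i)))"
    by (simp add: sum_distrib_left mult_ac)
  also have "\<dots> \<le> (\<Sum>i<N. \<Sum>j<N. Wmax * (((p i)\<^sup>2 + (p j)\<^sup>2) / 2))"
  proof (intro sum_mono)
    fix i j assume "i \<in> {..<N}" "j \<in> {..<N}"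
    then have "W s i j * (p i * (v j - v i)) \<le> W s i j * (((p i)\<^sup>2 + (p j)\<^sup>2) / 2)"
      using W_nonneg[OF s] pos_part_mult_diff_le[of "v i" M "v j"] by (intro mult_left_mono) (auto simp: p_def)
    also have "\<dots> \<le> Wmax * (((p i)\<^sup>2 + (p j)\<^sup>2) / 2)"
      using W_le[OF s] \<open>i \<in> {..<N}\<close> \<open>j \<in> {..<N}\<close> by (intro mult_right_mono) auto
    finally show "W s i j * (p i * (v j - v i)) \<le> Wmax * (((p i)\<^sup>2 + (p j)\<^sup>2) / 2)" .
  qed
  also have "\<dots> = real N * Wmax * V"
    by (simp add: V_def sum.distrib add_divide_distrib sum_divide_distrib[symmetric]
        sum_distrib_left[symmetric] algebra_simps)
  also have "\<dots> \<le> D * V"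
    using N_Wmax_le_D by (intro mult_right_mono) (auto simp: V_def sum_nonneg)
  finally show ?thesis by (simp add: p_def V_def)
qed

lemma upper_bound_invariant:
  assumes z: "consensus_solution z" and t0: "0 \<le> t0" "t0 \<le> t" and M: "\<forall>i<N. z i t0 \<le> M" and i: "i < N"
  shows "z i t \<le> M"
proof -
  \<comment> \<open>The energy of the excesses over \<open>M\<close> starts at 0 and can grow at most exponentially.\<close>
  define V where "V s = (\<Sum>i<N. (max 0 (z i s - M))\<^sup>2)" for s
  define V' where "V' s = (\<Sum>i<N. 2 * max 0 (z i s - M) * (\<Sum>j<N. W s i j * (z j s - z i s)))" for s
  have "- V t \<ge> exp (- (- 2 * D) * (t - t0)) * (- V t0)"
  proof (rule gronwall_lower_bound_except_finite[OF finite_E t0(2), of "\<lambda>s. - V s" "\<lambda>s. - V' s"])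
    fix s assume s: "s \<in> {t0<..<t}" "s \<notin> E"
    then have s0: "s > 0" using t0 by auto
    have "(V has_real_derivative V' s) (at s)"
      unfolding V_def V'_def
    proof (rule DERIV_sum)
      fix i assume "i \<in> {..<N}"
      then have "((\<lambda>s. z i s - M) has_real_derivative (\<Sum>j<N. W s i j * (z j s - z i s))) (at s)"
        using consensus_solution_derivative[OF z _ s0 s(2)] by (auto intro!: derivative_eq_intros)
      from DERIV_chain2[OF has_real_derivative_square_pos_part this]
      show "((\<lambda>s. (max 0 (z i s - M))\<^sup>2) has_real_derivative
          2 * max 0 (z i s - M) * (\<Sum>j<N. W s i j * (z j s - z i s))) (at s)"
        by simp
    qed
    moreover have "V' s \<le> 2 * D * V s"
      using excess_energy_drift_le[of s "\<lambda>i. z i s" M] s0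
      by (simp add: V_def V'_def sum_distrib_left[symmetric] mult.assoc)
    ultimately show "((\<lambda>s. - V s) has_real_derivative - V' s) (at s) \<and> - (- 2 * D) * - V s \<le> - V' s"
      by (auto intro: DERIV_minus)
  next
    show "continuous_on {t0..t} (\<lambda>s. - V s)" unfolding V_def
      using consensus_solution_continuous_on[OF z _ t0(1)] by (intro continuous_intros) auto
  qed
  moreover have "V t0 = 0" using M by (simp add: V_def)
  ultimately have "V t = 0" by (simp add: V_def antisym sum_nonneg)
  then have "(max 0 (z i t - M))\<^sup>2 = 0"
    using i by (simp add: V_def sum_nonneg_eq_0_iff)
  then show ?thesis by simp
qed

lemma lower_bound_invariant:
  assumes z: "consensus_solution z" and t0: "0 \<le> t0" "t0 \<le> t" and m: "\<forall>i<N. z i t0 \<ge> m" and i: "i < N"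
  shows "z i t \<ge> m"
  using upper_bound_invariant[OF consensus_solution_uminus[OF z] t0, of "- m" i] m i by auto

end

context linear_consensus
begin

lemma drift_lower_bound:
  assumes s: "s \<ge> 0" and m: "\<forall>k<N. z k s \<ge> m" and i: "i < N" and j: "j < N"
  shows "(\<Sum>k<N. W s j k * (z k s - z j s)) \<ge> W s j i * (z i s - m) - D * (z j s - m)"
proof -
  have "(\<Sum>k<N. W s j k * (z k s - z j s)) = (\<Sum>k<N. W s j k * (z k s - m) - W s j k * (z j s - m))"
    by (rule sum.cong) (auto simp: algebra_simps)
  also have "\<dots> = (\<Sum>k<N. W s j k * (z k s - m)) - (\<Sum>k<N. W s j k) * (z j s - m)"
    by (simp add: sum_subtractf sum_distrib_right)
  finally have "(\<Sum>k<N. W s j k * (z k s - z j s))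
      = (\<Sum>k<N. W s j k * (z k s - m)) - (\<Sum>k<N. W s j k) * (z j s - m)" .
  moreover have "W s j i * (z i s - m) \<le> (\<Sum>k<N. W s j k * (z k s - m))"
    using i m W_nonneg[OF s] by (intro member_le_sum) auto
  moreover have "(\<Sum>k<N. W s j k) * (z j s - m) \<le> D * (z j s - m)"
    using m j row_sum_le_D[OF s j] by (intro mult_right_mono) auto
  ultimately show ?thesis by linarith
qed

lemma excess_decay:
  assumes z: "consensus_solution z" and t1: "0 \<le> t1" "t1 \<le> t" and m: "\<forall>s\<ge>t1. \<forall>k<N. z k s \<ge> m"
    and i: "i < N" and \<beta>: "z i t1 - m \<ge> \<beta>" "\<beta> \<ge> 0"
  shows "z i t - m \<ge> \<beta> * exp (- D * (t - t1))"
proof -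
  have "z i t - m \<ge> exp (- D * (t - t1)) * (z i t1 - m)"
  proof (rule gronwall_lower_bound_except_finite[OF finite_E t1(2)])
    fix s assume s: "s \<in> {t1<..<t}" "s \<notin> E"
    then have s0: "s > 0" using t1 by auto
    have "((\<lambda>s. z i s - m) has_real_derivative (\<Sum>k<N. W s i k * (z k s - z i s))) (at s)"
      using consensus_solution_derivative[OF z i s0 s(2)] by (auto intro!: derivative_eq_intros)
    moreover have "W s i i * (z i s - m) \<ge> 0" using W_nonneg[of s i i] m s i s0 by auto
    then have "(\<Sum>k<N. W s i k * (z k s - z i s)) \<ge> - D * (z i s - m)"
      using drift_lower_bound[where s=s and z=z and m=m and i=i and j=i] m s i s0 by auto
    ultimately show "((\<lambda>s. z i s - m) has_real_derivative (\<Sum>k<N. W s i k * (z k s - z i s))) (at s) \<and>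
        - D * (z i s - m) \<le> (\<Sum>k<N. W s i k * (z k s - z i s))" by blast
  qed (use consensus_solution_continuous_on[OF z i t1(1)] in \<open>intro continuous_intros\<close>)
  moreover have "exp (- D * (t - t1)) * (z i t1 - m) \<ge> exp (- D * (t - t1)) * \<beta>"
    using \<beta> by (intro mult_left_mono) auto
  ultimately have "exp (- D * (t - t1)) * \<beta> \<le> z i t - m" by linarith
  then show ?thesis by (simp add: mult.commute)
qed

lemma excess_through_edge:
  assumes z: "consensus_solution z" and c: "0 \<le> c" and tau: "tau > 0" and m: "\<forall>s\<ge>c. \<forall>k<N. z k s \<ge> m"
    and i: "i < N" and j: "j < N" and w: "\<forall>s\<in>{c<..<c+tau}. W s j i \<ge> wmin" "wmin \<ge> 0"
    and \<beta>: "\<forall>s\<in>{c..c+tau}. z i s - m \<ge> \<beta>" "\<beta> \<ge> 0"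
  shows "z j (c + tau) - m \<ge> wmin * \<beta> / D * (1 - exp (- D * tau))"
proof -
  have "z j (c + tau) - m - wmin * \<beta> / D \<ge> exp (- D * (c + tau - c)) * (z j c - m - wmin * \<beta> / D)"
  proof (rule gronwall_lower_bound_affine_except_finite[OF finite_E _ D_pos])
    fix s assume s: "s \<in> {c<..<c+tau}" "s \<notin> E"
    then have s0: "s > 0" using c by auto
    have "((\<lambda>s. z j s - m) has_real_derivative (\<Sum>k<N. W s j k * (z k s - z j s))) (at s)"
      using consensus_solution_derivative[OF z j s0 s(2)] by (auto intro!: derivative_eq_intros)
    moreover have "W s j i * (z i s - m) \<ge> wmin * \<beta>"
      using w \<beta> s W_nonneg[of s j i] c by (intro mult_mono) auto
    then have "(\<Sum>k<N. W s j k * (z k s - z j s)) \<ge> wmin * \<beta> - D * (z j s - m)"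
      using drift_lower_bound[where s=s and z=z and m=m and i=i and j=j] m s i j s0 by auto
    ultimately show "((\<lambda>s. z j s - m) has_real_derivative (\<Sum>k<N. W s j k * (z k s - z j s))) (at s) \<and>
        wmin * \<beta> - D * (z j s - m) \<le> (\<Sum>k<N. W s j k * (z k s - z j s))" by blast
  qed (use tau consensus_solution_continuous_on[OF z j c] in \<open>auto intro!: continuous_intros\<close>)
  moreover have "exp (- D * tau) * (z j c - m - wmin * \<beta> / D) \<ge> exp (- D * tau) * (- (wmin * \<beta> / D))"
    using m j by (intro mult_left_mono) auto
  ultimately have "z j (c + tau) - m - wmin * \<beta> / D \<ge> exp (- D * tau) * (- (wmin * \<beta> / D))"
    by (simp only: add_diff_cancel_left')
  then show ?thesis by (simp add: algebra_simps)
qed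

definition state_min :: "(nat \<Rightarrow> real \<Rightarrow> real) \<Rightarrow> real \<Rightarrow> real" where
  "state_min z t = Min ((\<lambda>i. z i t) ` {..<N})"

definition state_max :: "(nat \<Rightarrow> real \<Rightarrow> real) \<Rightarrow> real \<Rightarrow> real" where
  "state_max z t = Max ((\<lambda>i. z i t) ` {..<N})"

lemma state_min_le: "i < N \<Longrightarrow> state_min z t \<le> z i t"
  unfolding state_min_def by (rule Min_le) auto

lemma state_max_ge: "i < N \<Longrightarrow> z i t \<le> state_max z t"
  unfolding state_max_def by (rule Max_ge) auto

lemma state_min_greatest: "(\<And>i. i < N \<Longrightarrow> c \<le> z i t) \<Longrightarrow> c \<le> state_min z t"
  unfolding state_min_def using N_pos by (subst Min_ge_iff) (auto simp: lessThan_empty_iff)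

lemma state_max_least: "(\<And>i. i < N \<Longrightarrow> z i t \<le> c) \<Longrightarrow> state_max z t \<le> c"
  unfolding state_max_def using N_pos by (subst Max_le_iff) (auto simp: lessThan_empty_iff)

lemma state_min_le_max: "state_min z t \<le> state_max z t"
  using state_min_le[of 0 z t] state_max_ge[of 0 z t] N_pos by auto

lemma state_min_le_later:
  "consensus_solution z \<Longrightarrow> 0 \<le> t0 \<Longrightarrow> t0 \<le> t \<Longrightarrow> i < N \<Longrightarrow> state_min z t0 \<le> z i t"
  by (rule lower_bound_invariant) (auto intro: state_min_le)

lemma state_max_ge_later:
  "consensus_solution z \<Longrightarrow> 0 \<le> t0 \<Longrightarrow> t0 \<le> t \<Longrightarrow> i < N \<Longrightarrow> z i t \<le> state_max z t0"
  by (rule upper_bound_invariant) (auto intro: state_max_ge)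

lemma state_min_mono:
  "consensus_solution z \<Longrightarrow> 0 \<le> t0 \<Longrightarrow> t0 \<le> t \<Longrightarrow> state_min z t0 \<le> state_min z t"
  by (rule state_min_greatest) (rule state_min_le_later)

lemma state_max_antimono:
  "consensus_solution z \<Longrightarrow> 0 \<le> t0 \<Longrightarrow> t0 \<le> t \<Longrightarrow> state_max z t \<le> state_max z t0"
  by (rule state_max_least) (rule state_max_ge_later)

end

definition persistent_edges ::
  "nat \<Rightarrow> (real \<Rightarrow> nat \<Rightarrow> nat \<Rightarrow> real) \<Rightarrow> real \<Rightarrow> real \<Rightarrow> real \<Rightarrow> real \<Rightarrow> (nat \<times> nat) set" where
  "persistent_edges N W wmin tau t1 t2 =
     {(j, i). j < N \<and> i < N \<and> (\<exists>c. t1 \<le> c \<and> c + tau \<le> t2 \<and> (\<forall>u\<in>{c<..<c+tau}. W u i j \<ge> wmin))}"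

lemma rtrancl_crosses_boundary:
  assumes "(r, b) \<in> R\<^sup>*" "r \<in> A" "b \<notin> A"
  obtains i j where "(i, j) \<in> R" "i \<in> A" "j \<notin> A"
  using assms by (induction rule: rtrancl_induct) auto

locale linear_consensus_rooted = linear_consensus +
  fixes wmin tau P :: real
  assumes wmin_pos: "wmin > 0" and tau_pos: "tau > 0" and P_pos: "P > 0"
    and rooted: "\<And>s. s \<ge> 0 \<Longrightarrow> quasi_strongly_connected N (persistent_edges N W wmin tau s (s + P))"
begin

text \<open>Over one period \<open>P\<close> a positive excess over a lower bound shrinks by at most the factor
  \<open>rho\<close>, whether it is kept by a node or passed on along a persistent edge.\<close>
definition rho :: real where
  "rho = exp (- 2 * D * P) * min 1 (wmin * (1 - exp (- D * tau)) / D)"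

lemma rho_pos: "rho > 0"
proof -
  have "exp (- D * tau) < 1" using D_pos tau_pos by simp
  then show ?thesis using wmin_pos D_pos by (simp add: rho_def)
qed

lemma rho_le_exp: "rho \<le> exp (- D * P)"
proof -
  have "rho \<le> exp (- 2 * D * P)" unfolding rho_def by (simp add: mult_left_le)
  also have "\<dots> \<le> exp (- D * P)" using D_pos P_pos by simp
  finally show ?thesis .
qed

lemma rho_le_1: "rho \<le> 1"
proof -
  have "exp (- D * P) \<le> 1" using D_pos P_pos by simp
  with rho_le_exp show ?thesis by linarith
qed

lemma excess_persists:
  assumes z: "consensus_solution z" and s0: "0 \<le> s0" and m: "\<forall>s\<ge>s0. \<forall>k<N. z k s \<ge> m"
    and i: "i < N" and \<eta>: "z i s0 - m \<ge> \<eta>" "\<eta> \<ge> 0"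
  shows "z i (s0 + P) - m \<ge> rho * \<eta>"
proof -
  have "rho * \<eta> \<le> \<eta> * exp (- D * P)"
    using rho_le_exp \<eta>(2) by (simp add: mult.commute mult_left_mono)
  also have "\<dots> \<le> z i (s0 + P) - m"
    using excess_decay[OF z s0 _ m i \<eta>, of "s0 + P"] P_pos by simp
  finally show ?thesis .
qed

lemma excess_spreads:
  assumes z: "consensus_solution z" and s0: "0 \<le> s0" and m: "\<forall>s\<ge>s0. \<forall>k<N. z k s \<ge> m"
    and i: "i < N" and \<eta>: "z i s0 - m \<ge> \<eta>" "\<eta> \<ge> 0"
    and e: "(i, j) \<in> persistent_edges N W wmin tau s0 (s0 + P)"
  shows "z j (s0 + P) - m \<ge> rho * \<eta>"
proof -
  obtain c where j: "j < N" and c: "s0 \<le> c" "c + tau \<le> s0 + P"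
    and w: "\<forall>u\<in>{c<..<c+tau}. W u j i \<ge> wmin"
    using e by (auto simp: persistent_edges_def)
  define \<beta> where "\<beta> = \<eta> * exp (- D * P)"
  have \<beta>: "\<beta> \<ge> 0" using \<eta> by (simp add: \<beta>_def)
  have decay_le: "exp (- D * P) \<le> exp (- D * (u - v))" if "u - v \<le> P" for u v
    using that D_pos by simp
  have "\<forall>u\<in>{c..c+tau}. z i u - m \<ge> \<beta>"
  proof
    fix u assume u: "u \<in> {c..c+tau}"
    have "\<beta> \<le> \<eta> * exp (- D * (u - s0))"
      unfolding \<beta>_def using u c \<eta> by (intro mult_left_mono decay_le) auto
    also have "\<dots> \<le> z i u - m" using u c by (intro excess_decay[OF z s0 _ m i \<eta>]) auto
    finally show "z i u - m \<ge> \<beta>" .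
  qed
  from excess_through_edge[OF z _ tau_pos _ i j w _ this \<beta>]
  have g: "z j (c + tau) - m \<ge> wmin * \<beta> / D * (1 - exp (- D * tau))" (is "_ \<ge> ?g")
    using s0 c m wmin_pos by auto
  have "?g \<ge> 0" using \<beta> wmin_pos D_pos tau_pos by simp
  have "rho * \<eta> \<le> ?g * exp (- D * P)"
  proof -
    have "rho \<le> exp (- 2 * D * P) * (wmin * (1 - exp (- D * tau)) / D)"
      unfolding rho_def by (intro mult_left_mono) auto
    then have "rho * \<eta> \<le> exp (- 2 * D * P) * (wmin * (1 - exp (- D * tau)) / D) * \<eta>"
      using \<eta>(2) by (rule mult_right_mono)
    also have "\<dots> = \<eta> * exp (- 2 * D * P) * (wmin * (1 - exp (- D * tau)) / D)"
      by (simp only: mult_ac)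
    also have "exp (- 2 * D * P) = exp (- D * P) * exp (- D * P)"
      by (subst mult_exp_exp) (simp add: algebra_simps)
    also have "\<eta> * (exp (- D * P) * exp (- D * P)) * (wmin * (1 - exp (- D * tau)) / D) = ?g * exp (- D * P)"
      by (simp add: \<beta>_def)
    finally show ?thesis .
  qed
  also have "\<dots> \<le> ?g * exp (- D * (s0 + P - (c + tau)))"
    using \<open>?g \<ge> 0\<close> c tau_pos by (intro mult_left_mono decay_le) auto
  also have "\<dots> \<le> z j (s0 + P) - m"
    using s0 c tau_pos m by (intro excess_decay[OF z _ _ _ j g \<open>?g \<ge> 0\<close>]) auto
  finally show ?thesis .
qed

lemma excess_set_grows:
  assumes z: "consensus_solution z" and s0: "0 \<le> s0" and m: "\<forall>s\<ge>s0. \<forall>k<N. z k s \<ge> m"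
    and A: "A \<subseteq> {..<N}" "A \<noteq> {..<N}"
    and r: "r \<in> A" "\<forall>b<N. (r, b) \<in> (persistent_edges N W wmin tau s0 (s0 + P))\<^sup>*"
    and \<eta>: "\<forall>i\<in>A. z i s0 - m \<ge> \<eta>" "\<eta> \<ge> 0"
  obtains j where "j < N" "j \<notin> A" "\<forall>i\<in>insert j A. z i (s0 + P) - m \<ge> rho * \<eta>"
proof -
  obtain b where "b < N" "b \<notin> A" using A by auto
  with r obtain i j where e: "(i, j) \<in> persistent_edges N W wmin tau s0 (s0 + P)"
    and ij: "i \<in> A" "j \<notin> A"
    by (meson rtrancl_crosses_boundary)
  have "z j (s0 + P) - m \<ge> rho * \<eta>"
    using A ij \<eta> by (intro excess_spreads[OF z s0 m _ _ _ e]) auto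
  moreover have "\<forall>k\<in>A. z k (s0 + P) - m \<ge> rho * \<eta>"
    using A \<eta> by (auto intro!: excess_persists[OF z s0 m])
  moreover have "j < N" using e by (simp add: persistent_edges_def)
  ultimately show ?thesis using ij that by auto
qed

end

context linear_consensus_rooted
begin

text \<open>Agents in \<open>A\<close> keep a margin above the lower bound \<open>m0\<close>, agents in \<open>B\<close> below the upper
  bound \<open>M0\<close>; within one period the root of the persistent edges enlarges one of the two sets.\<close>
lemma separated_sets_step:
  assumes z: "consensus_solution z" and s0: "0 \<le> s0"
    and lo: "\<forall>s\<ge>s0. \<forall>j<N. m0 \<le> z j s" and hi: "\<forall>s\<ge>s0. \<forall>j<N. z j s \<le> M0"
    and AB: "A \<union> B = {..<N}" and excA: "\<forall>i\<in>A. z i s0 - m0 \<ge> \<eta>" and excB: "\<forall>i\<in>B. M0 - z i s0 \<ge> \<eta>"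
    and \<eta>: "\<eta> \<ge> 0"
  obtains A' B' where "A' \<union> B' = {..<N}" and "A \<subseteq> A'" and "B \<subseteq> B'"
    and "A' = {..<N} \<or> B' = {..<N} \<or> card A + card B < card A' + card B'"
    and "\<forall>i\<in>A'. z i (s0 + P) - m0 \<ge> rho * \<eta>" and "\<forall>i\<in>B'. M0 - z i (s0 + P) \<ge> rho * \<eta>"
proof -
  have z': "consensus_solution (\<lambda>i t. - z i t)" by (rule consensus_solution_uminus[OF z])
  have hi': "\<forall>s\<ge>s0. \<forall>j<N. - M0 \<le> - z j s" and excB': "\<forall>i\<in>B. - z i s0 - - M0 \<ge> \<eta>"
    using hi excB by auto
  have keepA: "\<forall>i\<in>A. z i (s0 + P) - m0 \<ge> rho * \<eta>"
    using AB excA by (blast intro: excess_persists[OF z s0 lo _ _ \<eta>])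
  have keepB: "\<forall>i\<in>B. - z i (s0 + P) - - M0 \<ge> rho * \<eta>"
    using AB excB' by (blast intro: excess_persists[OF z' s0 hi' _ _ \<eta>])
  show ?thesis
  proof (cases "A = {..<N} \<or> B = {..<N}")
    case True
    with AB keepA keepB show ?thesis by (intro that[of A B]) auto
  next
    case False
    have fin: "finite A" "finite B" using AB by (auto intro: finite_subset)
    obtain r where r: "r < N" "\<forall>b<N. (r, b) \<in> (persistent_edges N W wmin tau s0 (s0 + P))\<^sup>*"
      using rooted[OF s0] by (auto simp: quasi_strongly_connected_def)
    consider "r \<in> A" | "r \<in> B" using AB r(1) by auto
    then show ?thesis
    proof cases
      case 1
      obtain j where "j < N" "j \<notin> A" "\<forall>i\<in>insert j A. z i (s0 + P) - m0 \<ge> rho * \<eta>"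
        using excess_set_grows[OF z s0 lo _ _ 1 r(2) excA \<eta>] AB False by auto
      with AB fin keepB show ?thesis by (intro that[of "insert j A" B]) auto
    next
      case 2
      obtain j where "j < N" "j \<notin> B" "\<forall>i\<in>insert j B. - z i (s0 + P) - - M0 \<ge> rho * \<eta>"
        using excess_set_grows[OF z' s0 hi' _ _ 2 r(2) excB' \<eta>] AB False by auto
      with AB fin keepA show ?thesis by (intro that[of A "insert j B"]) auto
    qed
  qed
qed

lemma separated_sets_after_periods:
  assumes z: "consensus_solution z" and t0: "0 \<le> t0" and "k \<le> N"
  defines "m0 \<equiv> state_min z t0" and "M0 \<equiv> state_max z t0"
  shows "\<exists>A B. A \<union> B = {..<N} \<and> (A = {..<N} \<or> B = {..<N} \<or> N + k \<le> card A + card B) \<and>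
      (\<forall>i\<in>A. z i (t0 + real k * P) - m0 \<ge> rho ^ k * ((M0 - m0) / 2)) \<and>
      (\<forall>i\<in>B. M0 - z i (t0 + real k * P) \<ge> rho ^ k * ((M0 - m0) / 2))"
  using \<open>k \<le> N\<close>
proof (induction k)
  case 0
  define A where "A = {i. i < N \<and> z i t0 \<ge> (m0 + M0) / 2}"
  define B where "B = {i. i < N \<and> z i t0 \<le> (m0 + M0) / 2}"
  have "A \<union> B = {..<N}" by (auto simp: A_def B_def)
  moreover from this have "N + 0 \<le> card A + card B" using card_Un_le[of A B] by simp
  moreover have "\<forall>i\<in>A. z i (t0 + real 0 * P) - m0 \<ge> rho ^ 0 * ((M0 - m0) / 2)"
    by (auto simp: A_def field_simps)
  moreover have "\<forall>i\<in>B. M0 - z i (t0 + real 0 * P) \<ge> rho ^ 0 * ((M0 - m0) / 2)"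
    by (auto simp: B_def field_simps)
  ultimately show ?case by blast
next
  case (Suc k)
  define s0 where "s0 = t0 + real k * P"
  define \<eta> where "\<eta> = rho ^ k * ((M0 - m0) / 2)"
  from Suc obtain A B where AB: "A \<union> B = {..<N}" "A = {..<N} \<or> B = {..<N} \<or> N + k \<le> card A + card B"
    and excA: "\<forall>i\<in>A. z i s0 - m0 \<ge> \<eta>" and excB: "\<forall>i\<in>B. M0 - z i s0 \<ge> \<eta>"
    by (auto simp: s0_def \<eta>_def)
  have s0: "0 \<le> s0" "t0 \<le> s0" using t0 P_pos by (simp_all add: s0_def)
  have \<eta>: "\<eta> \<ge> 0" using rho_pos state_min_le_max[of z t0] by (simp add: \<eta>_def m0_def M0_def)
  have "\<forall>s\<ge>s0. \<forall>j<N. m0 \<le> z j s" "\<forall>s\<ge>s0. \<forall>j<N. z j s \<le> M0"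
    using state_min_le_later[OF z t0] state_max_ge_later[OF z t0] s0(2) by (auto simp: m0_def M0_def)
  from separated_sets_step[OF z s0(1) this AB(1) excA excB \<eta>] obtain A' B'
    where A'B': "A' \<union> B' = {..<N}" "A \<subseteq> A'" "B \<subseteq> B'"
      "A' = {..<N} \<or> B' = {..<N} \<or> card A + card B < card A' + card B'"
      and excA': "\<forall>i\<in>A'. z i (s0 + P) - m0 \<ge> rho * \<eta>" and excB': "\<forall>i\<in>B'. M0 - z i (s0 + P) \<ge> rho * \<eta>" .
  have "A' = {..<N} \<or> B' = {..<N} \<or> N + Suc k \<le> card A' + card B'"
    using AB A'B' by auto
  moreover have "t0 + real (Suc k) * P = s0 + P" "rho ^ Suc k * ((M0 - m0) / 2) = rho * \<eta>"
    by (simp_all add: s0_def \<eta>_def algebra_simps)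
  ultimately show ?case using A'B'(1) excA' excB' by metis
qed

end

context linear_consensus_rooted
begin

definition state_spread :: "(nat \<Rightarrow> real \<Rightarrow> real) \<Rightarrow> real \<Rightarrow> real" where
  "state_spread z t = state_max z t - state_min z t"

lemma state_spread_contracts:
  assumes z: "consensus_solution z" and t0: "0 \<le> t0"
  shows "state_spread z (t0 + real N * P) \<le> (1 - rho ^ N / 2) * state_spread z t0"
proof -
  define t where "t = t0 + real N * P"
  define \<delta> where "\<delta> = rho ^ N * (state_spread z t0 / 2)"
  have t: "t0 \<le> t" using P_pos by (simp add: t_def)
  obtain A B where AB: "A \<union> B = {..<N}" "A = {..<N} \<or> B = {..<N} \<or> N + N \<le> card A + card B"
    and excA: "\<forall>i\<in>A. z i t - state_min z t0 \<ge> \<delta>"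
    and excB: "\<forall>i\<in>B. state_max z t0 - z i t \<ge> \<delta>"
    using separated_sets_after_periods[OF z t0 order_refl]
    by (auto simp: t_def \<delta>_def state_spread_def)
  have "A = {..<N} \<or> B = {..<N}"
  proof (rule ccontr)
    assume "\<not> (A = {..<N} \<or> B = {..<N})"
    moreover have "card A \<le> N" "card B \<le> N"
      using AB(1) card_mono[of "{..<N}" A] card_mono[of "{..<N}" B] by auto
    ultimately have "card A = card {..<N}" using AB(2) by auto
    then show False
      using AB(1) card_subset_eq[of "{..<N}" A] \<open>\<not> (A = {..<N} \<or> B = {..<N})\<close> by auto
  qed
  then have "state_spread z t \<le> state_spread z t0 - \<delta>"
  proof
    assume "A = {..<N}"
    then have "state_min z t0 + \<delta> \<le> state_min z t"
      using excA by (intro state_min_greatest) (auto simp: algebra_simps)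
    with state_max_antimono[OF z t0 t] show ?thesis by (simp add: state_spread_def)
  next
    assume "B = {..<N}"
    then have "state_max z t \<le> state_max z t0 - \<delta>"
      using excB by (intro state_max_least) (auto simp: algebra_simps)
    with state_min_mono[OF z t0 t] show ?thesis by (simp add: state_spread_def)
  qed
  then show ?thesis by (simp add: t_def \<delta>_def algebra_simps)
qed

end

context linear_consensus_rooted
begin

lemma state_spread_geometric_decay:
  assumes z: "consensus_solution z"
  shows "state_spread z (real j * (real N * P)) \<le> (1 - rho ^ N / 2) ^ j * state_spread z 0"
proof (induction j)
  case 0
  show ?case by simp
next
  case (Suc j)
  have "0 \<le> 1 - rho ^ N / 2" using rho_pos rho_le_1 power_le_one[of rho N] by simp
  have "state_spread z (real (Suc j) * (real N * P)) = state_spread z (real j * (real N * P) + real N * P)"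
    by (simp add: algebra_simps)
  also have "\<dots> \<le> (1 - rho ^ N / 2) * state_spread z (real j * (real N * P))"
    using P_pos by (intro state_spread_contracts[OF z]) simp
  also have "\<dots> \<le> (1 - rho ^ N / 2) * ((1 - rho ^ N / 2) ^ j * state_spread z 0)"
    using Suc \<open>0 \<le> 1 - rho ^ N / 2\<close> by (rule mult_left_mono)
  finally show ?case by simp
qed

lemma state_spread_arbitrarily_small:
  assumes z: "consensus_solution z" and e: "e > 0"
  obtains t where "t \<ge> 0" "state_spread z t < e"
proof -
  have "0 \<le> 1 - rho ^ N / 2" "1 - rho ^ N / 2 < 1"
    using rho_pos rho_le_1 power_le_one[of rho N] by auto
  then have "(\<lambda>j. (1 - rho ^ N / 2) ^ j * state_spread z 0) \<longlonglongrightarrow> 0 * state_spread z 0"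
    by (intro tendsto_intros LIMSEQ_power_zero) auto
  then have "\<forall>\<^sub>F j in sequentially. (1 - rho ^ N / 2) ^ j * state_spread z 0 < e"
    using e by (intro order_tendstoD(2)) auto
  then obtain j where "(1 - rho ^ N / 2) ^ j * state_spread z 0 < e"
    by (auto simp: eventually_sequentially)
  then show ?thesis
    using state_spread_geometric_decay[OF z, of j] P_pos that[of "real j * (real N * P)"] by simp
qed

lemma state_min_sup_between:
  assumes z: "consensus_solution z" and t1: "t1 \<ge> 0"
  shows "state_min z t1 \<le> (SUP t\<in>{0..}. state_min z t)" and "(SUP t\<in>{0..}. state_min z t) \<le> state_max z t1"
proof -
  have below_max: "state_min z t \<le> state_max z t1" if t: "t \<ge> 0" for t
  proof (cases "t \<le> t1")
    case True
    then show ?thesis using state_min_mono[OF z t True] state_min_le_max[of z t1] by linarith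
  next
    case False
    then show ?thesis using state_max_antimono[OF z t1, of t] state_min_le_max[of z t] by linarith
  qed
  then have "bdd_above (state_min z ` {0..})" by (intro bdd_aboveI[of _ "state_max z t1"]) auto
  then show "state_min z t1 \<le> (SUP t\<in>{0..}. state_min z t)" using t1 by (intro cSup_upper) auto
  show "(SUP t\<in>{0..}. state_min z t) \<le> state_max z t1" using below_max by (intro cSUP_least) auto
qed

theorem consensus_solution_converges:
  assumes z: "consensus_solution z"
  obtains zs where "\<forall>i<N. (z i \<longlongrightarrow> zs) at_top"
proof
  define zs where "zs = (SUP t\<in>{0..}. state_min z t)"
  show "\<forall>i<N. (z i \<longlongrightarrow> zs) at_top"
  proof (intro allI impI tendstoI)
    fix i :: nat and e :: real assume i: "i < N" and e: "e > 0"
    obtain t1 where t1: "t1 \<ge> 0" "state_spread z t1 < e" using state_spread_arbitrarily_small[OF z e] .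
    show "\<forall>\<^sub>F t in at_top. dist (z i t) zs < e"
      using eventually_ge_at_top[of t1]
    proof eventually_elim
      case (elim t)
      with state_min_le_later[OF z t1(1) elim i] state_max_ge_later[OF z t1(1) elim i]
        state_min_sup_between[OF z t1(1)] t1(2)
      show ?case by (simp add: zs_def dist_real_def state_spread_def abs_less_iff)
    qed
  qed
qed

end

section \<open>Dwell-time switching\<close>

lemma dwell_time_switching_times_ge:
  assumes "dwell_time_switching S \<sigma> ts tauD"
  shows "ts n \<ge> real n * tauD"
proof (induction n)
  case 0
  then show ?case using assms by (simp add: dwell_time_switching_def)
next
  case (Suc n)
  have "ts (Suc n) - ts n \<ge> tauD" using assms by (simp add: dwell_time_switching_def)
  then show ?case using Suc by (simp add: algebra_simps)
qed

lemma dwell_time_switching_finite_indices: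
  assumes d: "dwell_time_switching S \<sigma> ts tauD"
  shows "finite {n. ts n \<le> b}"
proof (rule finite_subset)
  have tau: "tauD > 0" using d by (simp add: dwell_time_switching_def)
  show "{n. ts n \<le> b} \<subseteq> {..nat \<lceil>b / tauD\<rceil>}"
  proof
    fix n assume "n \<in> {n. ts n \<le> b}"
    then have "real n * tauD \<le> b" using dwell_time_switching_times_ge[OF d, of n] by simp
    then have "real n \<le> b / tauD" using tau by (simp add: pos_le_divide_eq)
    then show "n \<in> {..nat \<lceil>b / tauD\<rceil>}" by simp linarith
  qed
qed simp

lemma dwell_time_switching_times_finite:
  assumes "dwell_time_switching S \<sigma> ts tauD"
  shows "finite (range ts \<inter> {a..b})"
proof (rule finite_subset)
  show "range ts \<inter> {a..b} \<subseteq> ts ` {n. ts n \<le> b}" by auto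
  show "finite (ts ` {n. ts n \<le> b})"
    using dwell_time_switching_finite_indices[OF assms] by simp
qed

lemma dwell_time_switching_interval:
  assumes d: "dwell_time_switching S \<sigma> ts tauD" and t: "t \<ge> 0"
  obtains n where "ts n \<le> t" "t < ts (Suc n)"
proof -
  define A where "A = {n. ts n \<le> t}"
  have fin: "finite A" unfolding A_def by (rule dwell_time_switching_finite_indices[OF d])
  have "0 \<in> A" using d t by (simp add: A_def dwell_time_switching_def)
  then have "Max A \<in> A" using fin by (intro Max_in) auto
  moreover have "Suc (Max A) \<notin> A" using Max_ge[OF fin] Suc_n_not_le_n by blast
  ultimately show ?thesis using that by (auto simp: A_def)
qed

text \<open>Dwell time turns every edge of a union graph into one that is active, with weight at
  least \<open>wmin\<close>, on a whole interval of length \<open>tauD\<close>; this costs a margin \<open>tauD\<close> on each side.\<close>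
lemma union_edges_subset_persistent_edges:
  assumes d: "dwell_time_switching S \<sigma> ts tauD" and s: "s \<ge> 0"
    and wmin: "\<And>t i j. t \<ge> 0 \<Longrightarrow> i < N \<Longrightarrow> j < N \<Longrightarrow> w (\<sigma> t) i j > 0 \<Longrightarrow> wmin \<le> w (\<sigma> t) i j"
  shows "union_edges N w \<sigma> (s + tauD) (s + tauD + T)
       \<subseteq> persistent_edges N (\<lambda>t i j. w (\<sigma> t) i j) wmin tauD s (s + (T + 2 * tauD))"
proof
  fix e assume "e \<in> union_edges N w \<sigma> (s + tauD) (s + tauD + T)"
  then obtain j i t where e: "e = (j, i)" "j < N" "i < N" "t \<in> {s + tauD..<s + tauD + T}" "w (\<sigma> t) i j > 0"
    by (auto simp: union_edges_def)
  have tau: "tauD > 0" using d by (simp add: dwell_time_switching_def)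
  have t0: "t \<ge> 0" using e(4) s tau by auto
  obtain k where k: "ts k \<le> t" "t < ts (Suc k)" using dwell_time_switching_interval[OF d t0] .
  define c where "c = max (ts k) (t - tauD)"
  have "wmin \<le> w (\<sigma> u) i j" if u: "u \<in> {c<..<c + tauD}" for u
  proof -
    have "ts (Suc k) - ts k \<ge> tauD" using d by (simp add: dwell_time_switching_def)
    then have "ts k \<le> u" "u < ts (Suc k)"
      using u k by (auto simp: c_def max_def split: if_splits)
    then have "\<sigma> u = \<sigma> t" using d k by (simp add: dwell_time_switching_def)
    then show ?thesis using wmin[OF t0 e(3,2,5)] by simp
  qed
  moreover have "s \<le> c" "c + tauD \<le> s + (T + 2 * tauD)" using e(4) k tau by (auto simp: c_def)
  ultimately show "e \<in> persistent_edges N (\<lambda>t i j. w (\<sigma> t) i j) wmin tauD s (s + (T + 2 * tauD))"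
    using e by (auto simp: persistent_edges_def)
qed

section \<open>The closed loop\<close>

lemma sum_intA_mult: "(\<Sum>d<m. intA m c d * v d) = (if c + 1 < m then v (c + 1) else 0)"
proof -
  have "(\<Sum>d<m. intA m c d * v d) = (\<Sum>d<m. if d = c + 1 then (if c + 1 < m then v (c + 1) else 0) else 0)"
    by (rule sum.cong) (auto simp: intA_def)
  then show ?thesis by (simp add: sum.delta)
qed

lemma sum_gainK1_mult: "(\<Sum>c<Suc n. gainK1 a c * v c) = - (\<Sum>c<n. a (c + 1) * v (c + 1))"
  by (subst sum.lessThan_Suc_shift) (simp add: gainK1_def sum_negf)

lemma sum_gainK2_mult:
  assumes "m = Suc n"
  shows "(\<Sum>c<m. gainK2 a m c * v c) = (\<Sum>c<n. a (c + 1) * v c) + v n"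
proof -
  have "(\<Sum>c<n. gainK2 a m c * v c) = (\<Sum>c<n. a (c + 1) * v c)"
    by (rule sum.cong) (use assms in \<open>auto simp: gainK2_def\<close>)
  then show ?thesis using assms by (simp add: gainK2_def)
qed

lemma sum_gainK2_mult_dynamics:
  assumes "m = Suc n"
  shows "(\<Sum>c<m. gainK2 a m c * ((\<Sum>d<m. intA m c d * v d) + intB m c * u))
       = (\<Sum>c<n. a (c + 1) * v (c + 1)) + u"
  unfolding sum_gainK2_mult[OF assms] using assms by (simp add: sum_intA_mult intB_def)

definition char_poly :: "(nat \<Rightarrow> real) \<Rightarrow> nat \<Rightarrow> complex poly" where
  "char_poly a n = monom 1 n + (\<Sum>k<n. monom (complex_of_real (a (k + 1))) k)"

lemma coeff_char_poly:
  "coeff (char_poly a n) j = (if j = n then 1 else if j < n then complex_of_real (a (j + 1)) else 0)"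
  by (simp add: char_poly_def coeff_sum sum.delta)

lemma degree_char_poly: "degree (char_poly a n) = n"
proof (rule antisym)
  show "degree (char_poly a n) \<le> n" by (rule degree_le) (auto simp: coeff_char_poly)
  show "n \<le> degree (char_poly a n)" by (rule le_degree) (simp add: coeff_char_poly)
qed

lemma lead_coeff_char_poly: "lead_coeff (char_poly a n) = 1"
  by (simp add: degree_char_poly coeff_char_poly)

lemma poly_char_poly: "poly (char_poly a n) z = z ^ n + (\<Sum>k<n. complex_of_real (a (k + 1)) * z ^ k)"
  by (simp add: char_poly_def poly_sum poly_monom)

lemma closed_loop_solution_derivative:
  assumes cl: "closed_loop_solution N m a w \<sigma> ts x" and i: "i < N" and c: "c < m"
    and t: "t > 0" "t \<notin> range ts"
  shows "((\<lambda>s. x i s c) has_real_derivative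
           ((\<Sum>d<m. intA m c d * x i t d) + intB m c * protocol N m a w \<sigma> x i t)) (at t)"
proof -
  have "at t within {0..} = at t" using t by (intro at_within_interior) simp
  moreover have "((\<lambda>s. x i s c) has_real_derivative
           ((\<Sum>d<m. intA m c d * x i t d) + intB m c * protocol N m a w \<sigma> x i t)) (at t within {0..})"
    using cl i c t unfolding closed_loop_solution_def by auto
  ultimately show ?thesis by simp
qed

lemma closed_loop_output_derivative:
  assumes m: "m = Suc n" and cl: "closed_loop_solution N m a w \<sigma> ts x" and i: "i < N"
    and t: "t > 0" "t \<notin> range ts" and w: "\<forall>j. w (\<sigma> t) i j \<ge> 0"
  defines "y \<equiv> \<lambda>j t. \<Sum>c<m. gainK2 a m c * x j t c"
  shows "(y i has_real_derivative (\<Sum>j<N. w (\<sigma> t) i j * (y j t - y i t))) (at t)"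
proof -
  define u where "u = protocol N m a w \<sigma> x i t"
  have "(y i has_real_derivative
     (\<Sum>c<m. gainK2 a m c * ((\<Sum>d<m. intA m c d * x i t d) + intB m c * u))) (at t)"
    unfolding u_def y_def by (intro DERIV_sum DERIV_cmult closed_loop_solution_derivative[OF cl i _ t]) auto
  moreover have "(\<Sum>c<m. gainK2 a m c * ((\<Sum>d<m. intA m c d * x i t d) + intB m c * u))
      = (\<Sum>c<n. a (c + 1) * x i t (c + 1)) + u"
    by (rule sum_gainK2_mult_dynamics[OF m])
  moreover have "u = - (\<Sum>c<n. a (c + 1) * x i t (c + 1))
      - (\<Sum>j\<in>neighbors N w (\<sigma> t) i. w (\<sigma> t) i j * (y i t - y j t))"
  proof -
    have "(\<Sum>c<m. gainK1 a c * x i t c) = - (\<Sum>c<n. a (c + 1) * x i t (c + 1))"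
      unfolding m by (rule sum_gainK1_mult)
    moreover have "(\<Sum>c<m. gainK2 a m c * (x i t c - x j t c)) = y i t - y j t" for j
      by (simp add: y_def sum_subtractf[symmetric] right_diff_distrib)
    ultimately show ?thesis by (simp add: u_def protocol_def)
  qed
  moreover have "(\<Sum>j\<in>neighbors N w (\<sigma> t) i. w (\<sigma> t) i j * (y i t - y j t))
      = (\<Sum>j<N. w (\<sigma> t) i j * (y i t - y j t))"
    using w by (intro sum.mono_neutral_left) (auto simp: neighbors_def order_le_less)
  moreover have "- (\<Sum>j<N. w (\<sigma> t) i j * (y i t - y j t)) = (\<Sum>j<N. w (\<sigma> t) i j * (y j t - y i t))"
    by (simp add: sum_negf[symmetric] algebra_simps)
  ultimately show ?thesis by simp
qed

lemma closed_loop_chain_derivative: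
  assumes cl: "closed_loop_solution N m a w \<sigma> ts x" and i: "i < N" and k: "k + 1 < m"
    and t: "t > 0" "t \<notin> range ts"
  shows "((\<lambda>s. x i s k) has_real_derivative x i t (k + 1)) (at t)"
proof -
  have "k \<noteq> m - 1" "k < m" "Suc k < m" using k by auto
  with closed_loop_solution_derivative[OF cl i _ t, of k] show ?thesis
    by (simp add: sum_intA_mult intB_def)
qed

lemma closed_loop_states_tendsto:
  assumes m: "m = Suc n" "n \<ge> 1" and cl: "closed_loop_solution N m a w \<sigma> ts x" and i: "i < N"
    and roots: "\<forall>z. poly (char_poly a n) z = 0 \<longrightarrow> Re z < 0" and a1: "a 1 \<noteq> 0" and c: "c < m"
    and fin: "\<And>a b. finite (range ts \<inter> {a..b})"
    and ylim: "((\<lambda>t. \<Sum>c<m. gainK2 a m c * x i t c) \<longlongrightarrow> ybar) at_top"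
  shows "((\<lambda>t. x i t c) \<longlongrightarrow> (if c = 0 then ybar / a 1 else 0)) at_top"
proof -
  \<comment> \<open>the deviations \<open>e k = x_{i,k} - \<delta> k\<close> obey the stable chain with characteristic
      polynomial \<open>char_poly a n\<close>, forced by the output error\<close>
  define \<delta> :: "nat \<Rightarrow> real" where "\<delta> k = (if k = 0 then ybar / a 1 else 0)" for k
  define e where "e k t = complex_of_real (x i t k - \<delta> k)" for k t
  define r where "r t = complex_of_real ((\<Sum>c<m. gainK2 a m c * x i t c) - ybar)" for t
  have sum_\<delta>: "(\<Sum>k<n. a (k + 1) * \<delta> k) = ybar"
  proof -
    have "(\<Sum>k<n. a (k + 1) * \<delta> k) = (\<Sum>k<n. if k = 0 then a 1 * (ybar / a 1) else 0)"
      by (rule sum.cong) (auto simp: \<delta>_def)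
    then show ?thesis using m a1 by (simp add: sum.delta)
  qed
  have e_derivative: "(e k has_vector_derivative complex_of_real (x i t (k + 1))) (at t)"
    if "k + 1 < m" "t > 0" "t \<notin> range ts" for k t
    unfolding e_def using closed_loop_chain_derivative[OF cl i that]
    by (intro has_vector_derivative_of_real) (auto intro!: derivative_eq_intros)
  have e_lim: "\<forall>k<n. (e k \<longlongrightarrow> 0) at_top"
  proof (rule higher_order_stable_tendsto_zero[OF degree_char_poly m(2) lead_coeff_char_poly roots _ fin])
    show "\<forall>k<n. continuous_on {0..} (e k)"
      using cl i m unfolding closed_loop_solution_def e_def by (auto intro!: continuous_intros)
    show "\<forall>t>0. t \<notin> range ts \<longrightarrow> (\<forall>k. k + 1 < n \<longrightarrow> (e k has_vector_derivative e (k + 1) t) (at t))"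
      using e_derivative m by (auto simp: e_def \<delta>_def)
    show "\<forall>t>0. t \<notin> range ts \<longrightarrow> (e (n - 1) has_vector_derivative r t - (\<Sum>k<n. coeff (char_poly a n) k * e k t)) (at t)"
    proof (intro allI impI)
      fix t assume t: "t > 0" "t \<notin> range ts"
      have "x i t n = (\<Sum>c<m. gainK2 a m c * x i t c) - ybar - (\<Sum>k<n. a (k + 1) * (x i t k - \<delta> k))"
        using sum_gainK2_mult[OF m(1)] sum_\<delta> by (simp add: right_diff_distrib sum_subtractf)
      then have "complex_of_real (x i t n) = r t - (\<Sum>k<n. coeff (char_poly a n) k * e k t)"
        by (simp add: r_def e_def coeff_char_poly)
      then show "(e (n - 1) has_vector_derivative r t - (\<Sum>k<n. coeff (char_poly a n) k * e k t)) (at t)"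
        using e_derivative[of "n - 1" t] t m by simp
    qed
    have "((\<lambda>t. complex_of_real ((\<Sum>c<m. gainK2 a m c * x i t c) - ybar)) \<longlongrightarrow> complex_of_real (ybar - ybar)) at_top"
      by (intro tendsto_intros ylim)
    then show "(r \<longlongrightarrow> 0) at_top" by (simp add: r_def[abs_def])
  qed
  have x_lim: "((\<lambda>t. x i t k) \<longlongrightarrow> \<delta> k) at_top" if "k < n" for k
  proof -
    have "((\<lambda>t. Re (e k t) + \<delta> k) \<longlongrightarrow> Re 0 + \<delta> k) at_top"
      using e_lim that by (intro tendsto_intros) auto
    then show ?thesis by (simp add: e_def)
  qed
  have "((\<lambda>t. (\<Sum>c<m. gainK2 a m c * x i t c) - (\<Sum>k<n. a (k + 1) * x i t k))
      \<longlongrightarrow> ybar - (\<Sum>k<n. a (k + 1) * \<delta> k)) at_top"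
    using ylim x_lim by (intro tendsto_intros) auto
  then have "((\<lambda>t. x i t n) \<longlongrightarrow> 0) at_top"
    using sum_\<delta> by (simp add: sum_gainK2_mult[OF m(1)])
  with x_lim show ?thesis
    using m c by (cases "c < n") (auto simp: \<delta>_def less_Suc_eq)
qed

lemma finite_family_weight_bounds:
  fixes w :: "'s \<Rightarrow> nat \<Rightarrow> nat \<Rightarrow> real"
  assumes "finite S"
  obtains Wmax wmin where "wmin > 0"
    and "\<And>k i j. k \<in> S \<Longrightarrow> i < N \<Longrightarrow> j < N \<Longrightarrow> w k i j \<le> Wmax"
    and "\<And>k i j. k \<in> S \<Longrightarrow> i < N \<Longrightarrow> j < N \<Longrightarrow> w k i j > 0 \<Longrightarrow> wmin \<le> w k i j"
proof
  define V where "V = (\<lambda>(k, i, j). w k i j) ` (S \<times> {..<N} \<times> {..<N})"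
  have fin: "finite V" unfolding V_def using assms by simp
  have V: "w k i j \<in> V" if "k \<in> S" "i < N" "j < N" for k i j
    unfolding V_def using that by force
  show "Min (insert 1 (V \<inter> {0<..})) > 0"
    using fin by (subst Min_gr_iff) auto
  show "w k i j \<le> Max V" if "k \<in> S" "i < N" "j < N" for k i j
    using fin V[OF that] by simp
  show "Min (insert 1 (V \<inter> {0<..})) \<le> w k i j" if "k \<in> S" "i < N" "j < N" "w k i j > 0" for k i j
    using fin V[OF that(1-3)] that(4) by (intro Min_le) auto
qed

lemma closed_loop_rooted_consensus:
  assumes N: "N \<ge> 1" and S: "finite S" and w_nonneg: "\<forall>k\<in>S. \<forall>i j. w k i j \<ge> 0"
    and d: "dwell_time_switching S \<sigma> ts tauD" and uj: "ujqsc N w \<sigma>"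
  obtains Wmax wmin P where "linear_consensus_rooted N (\<lambda>t i j. w (\<sigma> t) i j) (range ts) Wmax wmin tauD P"
proof -
  have tau: "tauD > 0" and \<sigma>: "\<And>t. t \<ge> 0 \<Longrightarrow> \<sigma> t \<in> S"
    using d by (auto simp: dwell_time_switching_def)
  obtain T where T: "T > 0" "\<And>t. t \<ge> 0 \<Longrightarrow> quasi_strongly_connected N (union_edges N w \<sigma> t (t + T))"
    using uj by (auto simp: ujqsc_def)
  obtain Wmax wmin where wmin: "wmin > 0"
    and Wmax: "\<And>k i j. k \<in> S \<Longrightarrow> i < N \<Longrightarrow> j < N \<Longrightarrow> w k i j \<le> Wmax"
    and wmin_le: "\<And>k i j. k \<in> S \<Longrightarrow> i < N \<Longrightarrow> j < N \<Longrightarrow> w k i j > 0 \<Longrightarrow> wmin \<le> w k i j"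
    using finite_family_weight_bounds[OF S, where N = N and w = w] by metis
  have "linear_consensus_rooted N (\<lambda>t i j. w (\<sigma> t) i j) (range ts) Wmax wmin tauD (T + 2 * tauD)"
  proof unfold_locales
    show "\<And>a b. finite (range ts \<inter> {a..b})" by (rule dwell_time_switching_times_finite[OF d])
    show "\<And>t i j. t \<ge> 0 \<Longrightarrow> w (\<sigma> t) i j \<ge> 0" using w_nonneg \<sigma> by blast
    show "\<And>t i j. t \<ge> 0 \<Longrightarrow> i < N \<Longrightarrow> j < N \<Longrightarrow> w (\<sigma> t) i j \<le> Wmax" using Wmax \<sigma> by blast
    show "T + 2 * tauD > 0" using T(1) tau by simp
  next
    fix s :: real assume s: "s \<ge> 0"
    obtain r where r: "r < N" "\<forall>b<N. (r, b) \<in> (union_edges N w \<sigma> (s + tauD) (s + tauD + T))\<^sup>*"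
      using T(2)[of "s + tauD"] s tau by (auto simp: quasi_strongly_connected_def add.assoc)
    have "\<And>t i j. t \<ge> 0 \<Longrightarrow> i < N \<Longrightarrow> j < N \<Longrightarrow> w (\<sigma> t) i j > 0 \<Longrightarrow> wmin \<le> w (\<sigma> t) i j"
      using \<sigma> wmin_le by blast
    from union_edges_subset_persistent_edges[where w = w and T = T, OF d s this]
    have "(union_edges N w \<sigma> (s + tauD) (s + tauD + T))\<^sup>*
        \<subseteq> (persistent_edges N (\<lambda>t i j. w (\<sigma> t) i j) wmin tauD s (s + (T + 2 * tauD)))\<^sup>*"
      by (rule rtrancl_mono)
    with r show "quasi_strongly_connected N
        (persistent_edges N (\<lambda>t i j. w (\<sigma> t) i j) wmin tauD s (s + (T + 2 * tauD)))"
      unfolding quasi_strongly_connected_def by blast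
  qed (use N wmin tau in auto)
  then show ?thesis using that by blast
qed

lemma stable_char_poly_coeff_nonzero:
  assumes "n \<ge> 1" and "\<forall>z. poly (char_poly a n) z = 0 \<longrightarrow> Re z < 0"
  shows "a 1 \<noteq> 0"
proof
  assume "a 1 = 0"
  then have "poly (char_poly a n) 0 = 0"
    using assms(1) by (simp add: poly_0_coeff_0 coeff_char_poly)
  then show False using assms(2) by fastforce
qed

lemma closed_loop_outputs_converge:
  assumes m: "m = Suc n" and N: "N \<ge> 1" and S: "finite S" and w: "\<forall>k\<in>S. \<forall>i j. w k i j \<ge> 0"
    and d: "dwell_time_switching S \<sigma> ts tauD" and uj: "ujqsc N w \<sigma>"
    and cl: "closed_loop_solution N m a w \<sigma> ts x"
  obtains ybar where "\<forall>i<N. ((\<lambda>t. \<Sum>c<m. gainK2 a m c * x i t c) \<longlongrightarrow> ybar) at_top"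
proof -
  obtain Wmax wmin P where "linear_consensus_rooted N (\<lambda>t i j. w (\<sigma> t) i j) (range ts) Wmax wmin tauD P"
    using closed_loop_rooted_consensus[OF N S w d uj] .
  then interpret linear_consensus_rooted N "\<lambda>t i j. w (\<sigma> t) i j" "range ts" Wmax wmin tauD P .
  define y where "y = (\<lambda>j t. \<Sum>c<m. gainK2 a m c * x j t c)"
  have "consensus_solution y"
    unfolding consensus_solution_def
  proof (intro conjI allI impI)
    show "continuous_on {0..} (y i)" if "i < N" for i
      using cl that unfolding closed_loop_solution_def y_def by (auto intro!: continuous_intros)
    show "(y i has_real_derivative (\<Sum>j<N. w (\<sigma> t) i j * (y j t - y i t))) (at t)"
      if "i < N" "t > 0" "t \<notin> range ts" for i t
      using closed_loop_output_derivative[OF m cl that] W_nonneg[of t] that by (simp add: y_def)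
  qed
  then show ?thesis using that consensus_solution_converges unfolding y_def by blast
qed

theorem theorem1:
  fixes N m :: nat and a :: "nat \<Rightarrow> real" and S :: "'s set"
    and w :: "'s \<Rightarrow> nat \<Rightarrow> nat \<Rightarrow> real" and \<sigma> :: "real \<Rightarrow> 's"
    and ts :: "nat \<Rightarrow> real" and tauD :: real
    and x :: "nat \<Rightarrow> real \<Rightarrow> nat \<Rightarrow> real"
  assumes "N \<ge> 1" and "m \<ge> 2"
    and "finite S"
    and "\<forall>k\<in>S. \<forall>i j. w k i j \<ge> 0"
    and "\<forall>k\<in>S. \<forall>i. w k i i = 0"
    and "dwell_time_switching S \<sigma> ts tauD"
    and "\<forall>z::complex. z ^ (m - 1) + (\<Sum>k<m - 1. complex_of_real (a (k + 1)) * z ^ k) = 0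
            \<longrightarrow> Re z < 0"
    and "ujqsc N w \<sigma>"
    and "closed_loop_solution N m a w \<sigma> ts x"
  shows "\<exists>xbar::real. \<forall>i<N. \<forall>c<m.
           ((\<lambda>t. x i t c) \<longlongrightarrow> (if c = 0 then xbar / a 1 else 0)) at_top"
proof -
  define n where "n = m - 1"
  have m: "m = Suc n" "n \<ge> 1" using assms(2) by (simp_all add: n_def)
  have roots: "\<forall>z. poly (char_poly a n) z = 0 \<longrightarrow> Re z < 0"
    using assms(7) m by (simp add: poly_char_poly)
  obtain ybar where ybar: "\<forall>i<N. ((\<lambda>t. \<Sum>c<m. gainK2 a m c * x i t c) \<longlongrightarrow> ybar) at_top"
    using closed_loop_outputs_converge[OF m(1) assms(1,3,4,6,8,9)] .
  show ?thesis
  proof (intro exI allI impI)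
    fix i c assume "i < N" "c < m"
    with ybar show "((\<lambda>t. x i t c) \<longlongrightarrow> (if c = 0 then ybar / a 1 else 0)) at_top"
      by (intro closed_loop_states_tendsto[OF m assms(9) _ roots stable_char_poly_coeff_nonzero[OF m(2) roots]
            _ dwell_time_switching_times_finite[OF assms(6)]]) auto
  qed
qed

end
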